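(* For the average-cost MDP $\Lambda$ described in the context, there exists an optimal policy that is deterministic and stationary, i.e., there exists a map $\phi^*:\mathbb{N}^+\to\mathcal{A}$ such that the stationary policy that uses action $\phi^*(s)$ whenever the state is $s$ minimizes $V(\phi)$ over all (possibly history-dependent, randomized) policies $\phi$.
   Context: Fix $N\in\mathbb{N}^+$ vehicle types $\mathcal{N}=\{1,\dots,N\}$. Type $n$ has arrival probability $p_n\in(0,1]$, mean operational cost $c_n\ge 0$ and mean sensing capability $r_n\in(0,1]$. Fix constants $\beta\in(0,1)$ and $\epsilon>0$. The action set is $\mathcal{A}=2^{\mathcal{N}}$ (all subsets of $\mathcal{N}$, including $\emptyset$). For $a\in\mathcal{A}$ define the success probability $Q_\emptyset=0$ and $Q_a=1-\prod_{n\in a}(1-r_np_n)$ for $a\neq\emptyset$, and the expected recruitment cost $E_a=\sum_{n\in a}p_nc_n$ ($E_\emptyset=0$). For a state (age) $\delta\in\mathbb{N}^+$ define the expected freshness gain $G_a(\delta)=Q_a(\delta^2+2\delta)\epsilon-(1+\delta)^2\epsilon$ and the immediate cost $u(\delta,a)=(1-\beta)E_a-\beta G_a(\delta)$. The MDP $\Lambda$ has state space $\mathcal{S}=\mathbb{N}^+$, action space $\mathcal{A}$, and transition probabilities: from state $s$ under action $a$, go to state $1$ with probability $Q_a$ and to state $s+1$ with probability $1-Q_a$. For a policy $\phi$ (choosing action $A(t)$ at time $t$), the average cost is $V(\phi)=\limsup_{T\to\infty}\frac1T\mathbb{E}^\phi\big[\sum_{t=1}^T u(S(t),A(t))\big]$,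 with $S(1)=1$; a policy is optimal if it minimizes $V$. *)

theory Defs
  imports "HOL-Probability.Probability"
begin

text \<open>Vehicle types are 1..N; an action is a subset of {1..N}.
  Parameters p, c, r are functions on type indices.\<close>

definition Qa :: "(nat \<Rightarrow> real) \<Rightarrow> (nat \<Rightarrow> real) \<Rightarrow> nat set \<Rightarrow> real" where
  "Qa p r a = (if a = {} then 0 else 1 - (\<Prod>n\<in>a. 1 - r n * p n))"

definition Ea :: "(nat \<Rightarrow> real) \<Rightarrow> (nat \<Rightarrow> real) \<Rightarrow> nat set \<Rightarrow> real" where
  "Ea p c a = (\<Sum>n\<in>a. p n * c n)"

definition Ga :: "(nat \<Rightarrow> real) \<Rightarrow> (nat \<Rightarrow> real) \<Rightarrow> real \<Rightarrow> nat set \<Rightarrow> nat \<Rightarrow> real" where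
  "Ga p r eps a d = Qa p r a * (real d ^ 2 + 2 * real d) * eps - (1 + real d) ^ 2 * eps"

definition ucost :: "(nat \<Rightarrow> real) \<Rightarrow> (nat \<Rightarrow> real) \<Rightarrow> (nat \<Rightarrow> real) \<Rightarrow> real \<Rightarrow> real
    \<Rightarrow> nat \<Rightarrow> nat set \<Rightarrow> real" where
  "ucost p c r beta eps d a = (1 - beta) * Ea p c a - beta * Ga p r eps a d"

definition trans_pmf :: "(nat \<Rightarrow> real) \<Rightarrow> (nat \<Rightarrow> real) \<Rightarrow> nat set \<Rightarrow> nat \<Rightarrow> nat pmf" where
  "trans_pmf p r a s = map_pmf (\<lambda>b. if b then 1 else Suc s) (bernoulli_pmf (Qa p r a))"

type_synonym policy = "(nat \<times> nat set) list \<Rightarrow> nat \<Rightarrow> nat set pmf"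

definition valid_policy :: "nat \<Rightarrow> policy \<Rightarrow> bool" where
  "valid_policy N \<phi> \<longleftrightarrow> (\<forall>h s. set_pmf (\<phi> h s) \<subseteq> Pow {1..N})"

text \<open>Distribution of (history of the first t steps, current state S(t+1)), with S(1) = 1.\<close>
fun hist_pmf :: "(nat \<Rightarrow> real) \<Rightarrow> (nat \<Rightarrow> real) \<Rightarrow> policy \<Rightarrow> nat
    \<Rightarrow> ((nat \<times> nat set) list \<times> nat) pmf" where
  "hist_pmf p r \<phi> 0 = return_pmf ([], 1)"
| "hist_pmf p r \<phi> (Suc t) =
     bind_pmf (hist_pmf p r \<phi> t) (\<lambda>(h, s).
       bind_pmf (\<phi> h s) (\<lambda>a.
         map_pmf (\<lambda>s'. (h @ [(s, a)], s')) (trans_pmf p r a s)))"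

definition total_cost :: "(nat \<Rightarrow> real) \<Rightarrow> (nat \<Rightarrow> real) \<Rightarrow> (nat \<Rightarrow> real) \<Rightarrow> real \<Rightarrow> real
    \<Rightarrow> policy \<Rightarrow> nat \<Rightarrow> real" where
  "total_cost p c r beta eps \<phi> T =
     measure_pmf.expectation (hist_pmf p r \<phi> T)
       (\<lambda>(h, s). sum_list (map (\<lambda>(d, a). ucost p c r beta eps d a) h))"

definition avg_cost :: "(nat \<Rightarrow> real) \<Rightarrow> (nat \<Rightarrow> real) \<Rightarrow> (nat \<Rightarrow> real) \<Rightarrow> real \<Rightarrow> real
    \<Rightarrow> policy \<Rightarrow> ereal" where
  "avg_cost p c r beta eps \<phi> =
     limsup (\<lambda>T. ereal (total_cost p c r beta eps \<phi> T / real T))"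

definition stationary_det :: "(nat \<Rightarrow> nat set) \<Rightarrow> policy" where
  "stationary_det f = (\<lambda>h s. return_pmf (f s))"

end

theory Submission
  imports Defs
begin

(* The relative value function v is built explicitly. For large ages the action F with maximal
   success probability (cheapest among those) is optimal, and always playing it gives a relative
   value that is quadratic in the age, in closed form; below a threshold v is obtained by backward
   induction with the Bellman operator. The gain g is chosen by the intermediate value theorem so
   that v 1 = 0, which makes (g, v) a solution of the average-cost optimality equation.
   The greedy stationary policy then has average cost at most g because v is bounded below.
   Every policy has average cost at least g: v - lam * s^3 is bounded above and satisfies the
   optimality inequality for costs inflated by the factor 1 + 3 lam / (beta eps); let lam -> 0. *)

section \<open>Elementary analysis\<close>

lemma continuous_on_Min_image:
  fixes f :: "'a \<Rightarrow> real \<Rightarrow> real"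
  assumes "finite A" "A \<noteq> {}" "\<And>a. a \<in> A \<Longrightarrow> continuous_on S (f a)"
  shows "continuous_on S (\<lambda>x. Min ((\<lambda>a. f a x) ` A))"
  using assms
proof (induction A rule: finite_ne_induct)
  case (singleton a)
  then show ?case by simp
next
  case (insert a A)
  then have "continuous_on S (\<lambda>x. min (f a x) (Min ((\<lambda>a. f a x) ` A)))"
    by (intro continuous_on_min) auto
  with insert show ?case by simp
qed

lemma quadratic_minus_cubic_le:
  fixes B lam x :: real
  assumes "0 \<le> B" "0 < lam" "0 \<le> x"
  shows "B * x ^ 2 - lam * x ^ 3 \<le> B * (B / lam) ^ 2"
proof (cases "x \<le> B / lam")
  case True
  then have "B * x ^ 2 \<le> B * (B / lam) ^ 2"
    using assms by (intro mult_left_mono power_mono) auto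
  moreover have "0 \<le> lam * x ^ 3" using assms by simp
  ultimately show ?thesis by linarith
next
  case False
  then have "B * x ^ 2 \<le> (lam * x) * x ^ 2"
    using assms by (intro mult_right_mono) (auto simp: field_simps)
  then have "B * x ^ 2 - lam * x ^ 3 \<le> 0"
    by (simp add: power2_eq_square power3_eq_cube algebra_simps)
  also have "0 \<le> B * (B / lam) ^ 2" using assms by simp
  finally show ?thesis .
qed

lemma tendsto_ereal_add_const_div:
  "(\<lambda>T. ereal (a + D / real T)) \<longlonglongrightarrow> ereal a"
  using tendsto_add[OF tendsto_const[of a] lim_const_over_n[of D]] by auto

lemma limsup_le_of_le_add_const_div:
  fixes x :: "nat \<Rightarrow> real"
  assumes "\<And>T. 1 \<le> T \<Longrightarrow> x T \<le> a + D / real T"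
  shows "limsup (\<lambda>T. ereal (x T)) \<le> ereal a"
proof -
  have "limsup (\<lambda>T. ereal (x T)) \<le> limsup (\<lambda>T. ereal (a + D / real T))"
    using assms by (intro Limsup_mono) (auto simp: eventually_sequentially)
  also have "\<dots> = ereal a"
    by (intro lim_imp_Limsup tendsto_ereal_add_const_div) simp
  finally show ?thesis .
qed

lemma limsup_ge_of_ge_add_const_div:
  fixes x :: "nat \<Rightarrow> real"
  assumes "\<And>T. 1 \<le> T \<Longrightarrow> a + D / real T \<le> x T"
  shows "ereal a \<le> limsup (\<lambda>T. ereal (x T))"
proof -
  have "ereal a = limsup (\<lambda>T. ereal (a + D / real T))"
    by (intro lim_imp_Limsup[symmetric] tendsto_ereal_add_const_div) simp
  also have "\<dots> \<le> limsup (\<lambda>T. ereal (x T))"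
    using assms by (intro Limsup_mono) (auto simp: eventually_sequentially)
  finally show ?thesis .
qed

section \<open>Expectations along the controlled process\<close>

lemma expectation_bind_pmf_finite:
  fixes h :: "'b \<Rightarrow> real"
  assumes "finite (set_pmf M)" "\<And>x. x \<in> set_pmf M \<Longrightarrow> finite (set_pmf (f x))"
  shows "measure_pmf.expectation (bind_pmf M f) h =
    measure_pmf.expectation M (\<lambda>x. measure_pmf.expectation (f x) h)"
proof -
  have "measure_pmf.expectation (bind_pmf M f) h =
      (\<Sum>x\<in>set_pmf M. pmf M x *\<^sub>R measure_pmf.expectation (f x) h)"
    using assms by (intro pmf_expectation_bind) auto
  also have "\<dots> = measure_pmf.expectation M (\<lambda>x. measure_pmf.expectation (f x) h)"
    using assms by (intro integral_measure_pmf[symmetric]) auto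
  finally show ?thesis .
qed

lemma expectation_mono_finite:
  fixes f g :: "'a \<Rightarrow> real"
  assumes "finite (set_pmf M)" "\<And>x. x \<in> set_pmf M \<Longrightarrow> f x \<le> g x"
  shows "measure_pmf.expectation M f \<le> measure_pmf.expectation M g"
  using assms
  by (intro integral_mono_AE integrable_measure_pmf_finite) (auto simp: AE_measure_pmf_iff)

lemma finite_set_pmf_trans_pmf: "finite (set_pmf (trans_pmf p r a s))"
  unfolding trans_pmf_def by simp

lemma expectation_trans_pmf:
  assumes "0 \<le> Qa p r a" "Qa p r a \<le> 1"
  shows "measure_pmf.expectation (trans_pmf p r a s) k =
    Qa p r a * k 1 + (1 - Qa p r a) * k (Suc s)"
  using assms unfolding trans_pmf_def by (simp add: algebra_simps)

lemma finite_set_pmf_hist_pmf: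
  assumes "\<And>h s. finite (set_pmf (\<psi> h s))"
  shows "finite (set_pmf (hist_pmf p r \<psi> T))"
  by (induction T) (auto simp: assms finite_set_pmf_trans_pmf split: prod.splits)

lemma expectation_hist_pmf_Suc:
  fixes \<Phi> :: "(nat \<times> nat set) list \<times> nat \<Rightarrow> real"
  assumes fin: "\<And>h s. finite (set_pmf (\<psi> h s))"
  shows "measure_pmf.expectation (hist_pmf p r \<psi> (Suc T)) \<Phi> =
    measure_pmf.expectation (hist_pmf p r \<psi> T) (\<lambda>(h, s).
      measure_pmf.expectation (\<psi> h s) (\<lambda>a.
        measure_pmf.expectation (trans_pmf p r a s) (\<lambda>s'. \<Phi> (h @ [(s, a)], s'))))"
proof -
  have step: "measure_pmf.expectation
      (\<psi> h s \<bind> (\<lambda>a. map_pmf (\<lambda>s'. (h @ [(s, a)], s')) (trans_pmf p r a s))) \<Phi> =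
    measure_pmf.expectation (\<psi> h s) (\<lambda>a.
      measure_pmf.expectation (trans_pmf p r a s) (\<lambda>s'. \<Phi> (h @ [(s, a)], s')))" for h s
    by (subst expectation_bind_pmf_finite) (simp_all add: fin finite_set_pmf_trans_pmf)
  show ?thesis
    unfolding hist_pmf.simps
    by (subst expectation_bind_pmf_finite)
       (auto simp: fin finite_set_pmf_hist_pmf finite_set_pmf_trans_pmf step case_prod_unfold)
qed

lemma expectation_hist_pmf_ge:
  fixes \<Phi> :: "(nat \<times> nat set) list \<times> nat \<Rightarrow> real"
  assumes fin: "\<And>h s. finite (set_pmf (\<psi> h s))"
    and drift: "\<And>h s a. a \<in> set_pmf (\<psi> h s) \<Longrightarrow>
      \<Phi> (h, s) + g \<le> measure_pmf.expectation (trans_pmf p r a s) (\<lambda>s'. \<Phi> (h @ [(s, a)], s'))"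
  shows "\<Phi> ([], 1) + real T * g \<le> measure_pmf.expectation (hist_pmf p r \<psi> T) \<Phi>"
proof (induction T)
  case 0
  show ?case by simp
next
  case (Suc T)
  let ?next = "\<lambda>(h, s). measure_pmf.expectation (\<psi> h s) (\<lambda>a.
    measure_pmf.expectation (trans_pmf p r a s) (\<lambda>s'. \<Phi> (h @ [(s, a)], s')))"
  have finT: "finite (set_pmf (hist_pmf p r \<psi> T))"
    using fin by (rule finite_set_pmf_hist_pmf)
  have one_step: "\<Phi> x + g \<le> ?next x" for x
  proof -
    obtain h s where x: "x = (h, s)" by fastforce
    have "\<Phi> (h, s) + g = measure_pmf.expectation (\<psi> h s) (\<lambda>_. \<Phi> (h, s) + g)"
      by simp
    also have "\<dots> \<le> measure_pmf.expectation (\<psi> h s) (\<lambda>a.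
        measure_pmf.expectation (trans_pmf p r a s) (\<lambda>s'. \<Phi> (h @ [(s, a)], s')))"
      using fin drift by (rule expectation_mono_finite)
    finally show ?thesis unfolding x by simp
  qed
  have "\<Phi> ([], 1) + real (Suc T) * g = (\<Phi> ([], 1) + real T * g) + g"
    by (simp add: algebra_simps)
  also have "\<dots> \<le> measure_pmf.expectation (hist_pmf p r \<psi> T) \<Phi> + g"
    using Suc by simp
  also have "\<dots> = measure_pmf.expectation (hist_pmf p r \<psi> T) (\<lambda>x. \<Phi> x + g)"
    using finT by (simp add: integrable_measure_pmf_finite)
  also have "\<dots> \<le> measure_pmf.expectation (hist_pmf p r \<psi> T) ?next"
    using finT one_step by (rule expectation_mono_finite)
  also have "\<dots> = measure_pmf.expectation (hist_pmf p r \<psi> (Suc T)) \<Phi>"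
    using fin by (rule expectation_hist_pmf_Suc[symmetric])
  finally show ?case .
qed

section \<open>Verification of the average-cost optimality equation\<close>

locale freshness_mdp =
  fixes N :: nat and p c r :: "nat \<Rightarrow> real" and beta eps :: real
  assumes N_pos: "1 \<le> N"
    and p_bounds: "\<And>n. n \<in> {1..N} \<Longrightarrow> 0 < p n \<and> p n \<le> 1"
    and c_nonneg: "\<And>n. n \<in> {1..N} \<Longrightarrow> 0 \<le> c n"
    and r_bounds: "\<And>n. n \<in> {1..N} \<Longrightarrow> 0 < r n \<and> r n \<le> 1"
    and beta_pos: "0 < beta" and beta_less_1: "beta < 1" and eps_pos: "0 < eps"
begin

abbreviation Q :: "nat set \<Rightarrow> real" where "Q \<equiv> Qa p r"
abbreviation E :: "nat set \<Rightarrow> real" where "E \<equiv> Ea p c"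
abbreviation U :: "nat \<Rightarrow> nat set \<Rightarrow> real" where "U \<equiv> ucost p c r beta eps"

lemma Q_bounds:
  assumes "a \<subseteq> {1..N}"
  shows "0 \<le> Q a" "Q a \<le> 1"
proof -
  have factor: "0 \<le> 1 - r n * p n \<and> 1 - r n * p n \<le> 1" if "n \<in> a" for n
  proof -
    have "0 < p n" "p n \<le> 1" "0 < r n" "r n \<le> 1"
      using that assms p_bounds[of n] r_bounds[of n] by auto
    then show ?thesis by (simp add: mult_le_one)
  qed
  then have "0 \<le> (\<Prod>n\<in>a. 1 - r n * p n)" "(\<Prod>n\<in>a. 1 - r n * p n) \<le> 1"
    by (simp_all add: prod_nonneg prod_le_1)
  then show "0 \<le> Q a" "Q a \<le> 1"
    unfolding Qa_def by auto
qed

lemma E_nonneg: "a \<subseteq> {1..N} \<Longrightarrow> 0 \<le> E a"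
  unfolding Ea_def using p_bounds c_nonneg
  by (intro sum_nonneg) (meson less_imp_le mult_nonneg_nonneg subsetD)

lemma U_eq: "U s a = (1 - beta) * E a + beta * eps * (1 + (1 - Q a) * (real s ^ 2 + 2 * real s))"
  unfolding ucost_def Ga_def by (simp add: algebra_simps power2_eq_square)

lemma U_ge:
  assumes "a \<subseteq> {1..N}"
  shows "beta * eps * (1 + (1 - Q a) * (real s ^ 2 + 2 * real s)) \<le> U s a"
  using E_nonneg[OF assms] beta_less_1 by (simp add: U_eq)

lemma U_nonneg: "a \<subseteq> {1..N} \<Longrightarrow> 0 \<le> U s a"
  using U_ge[of a s] Q_bounds[of a] beta_pos eps_pos
  by (smt (verit) mult_nonneg_nonneg zero_le_power2 of_nat_0_le_iff)

lemma cube_drift_le: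
  assumes "a \<subseteq> {1..N}"
  shows "Q a + (1 - Q a) * (real s + 1) ^ 3 - real s ^ 3 \<le> 3 * U s a / (beta * eps)"
proof -
  have "0 \<le> 3 * real s * (1 - Q a) + 2 + Q a * real s ^ 3"
    using Q_bounds[OF assms] by simp
  then have "Q a + (1 - Q a) * (real s + 1) ^ 3 - real s ^ 3
      \<le> 3 * (1 + (1 - Q a) * (real s ^ 2 + 2 * real s))"
    by (simp add: algebra_simps power2_eq_square power3_eq_cube)
  also have "\<dots> \<le> 3 * U s a / (beta * eps)"
    using U_ge[OF assms, of s] beta_pos eps_pos by (simp add: field_simps)
  finally show ?thesis .
qed

definition path_cost :: "(nat \<times> nat set) list \<Rightarrow> real" where
  "path_cost h = sum_list (map (\<lambda>(s, a). U s a) h)"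

lemma total_cost_eq:
  "total_cost p c r beta eps \<psi> T =
    measure_pmf.expectation (hist_pmf p r \<psi> T) (\<lambda>(h, s). path_cost h)"
  unfolding total_cost_def path_cost_def ..

lemma valid_policy_finite:
  "valid_policy N \<psi> \<Longrightarrow> finite (set_pmf (\<psi> h s))"
  unfolding valid_policy_def by (meson finite_Pow_iff finite_atLeastAtMost finite_subset)

lemma valid_policy_stationary_det:
  "(\<And>s. f s \<subseteq> {1..N}) \<Longrightarrow> valid_policy N (stationary_det f)"
  unfolding valid_policy_def stationary_det_def by simp

lemma total_cost_drift:
  assumes \<psi>: "valid_policy N \<psi>"
    and drift: "\<And>h s a. a \<in> set_pmf (\<psi> h s) \<Longrightarrow>
      k s + g \<le> w * U s a + Q a * k 1 + (1 - Q a) * k (Suc s)"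
  shows "k 1 + real T * g \<le> w * total_cost p c r beta eps \<psi> T +
    measure_pmf.expectation (hist_pmf p r \<psi> T) (\<lambda>(h, s). k s)"
proof -
  let ?\<Phi> = "\<lambda>(h, s). w * path_cost h + k s"
  have fin: "finite (set_pmf (\<psi> h s))" for h s
    using \<psi> by (rule valid_policy_finite)
  have finT: "finite (set_pmf (hist_pmf p r \<psi> T))"
    using fin by (rule finite_set_pmf_hist_pmf)
  have "?\<Phi> ([], 1) + real T * g \<le> measure_pmf.expectation (hist_pmf p r \<psi> T) ?\<Phi>"
  proof (rule expectation_hist_pmf_ge[OF fin])
    fix h s a
    assume a: "a \<in> set_pmf (\<psi> h s)"
    then have "a \<subseteq> {1..N}" using \<psi> unfolding valid_policy_def by auto
    then have "measure_pmf.expectation (trans_pmf p r a s) (\<lambda>s'. ?\<Phi> (h @ [(s, a)], s'))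
        = w * path_cost h + (w * U s a + Q a * k 1 + (1 - Q a) * k (Suc s))"
      using Q_bounds by (simp add: expectation_trans_pmf path_cost_def algebra_simps)
    then show "?\<Phi> (h, s) + g \<le>
        measure_pmf.expectation (trans_pmf p r a s) (\<lambda>s'. ?\<Phi> (h @ [(s, a)], s'))"
      using drift[OF a] by simp
  qed
  also have "measure_pmf.expectation (hist_pmf p r \<psi> T) ?\<Phi> = w * total_cost p c r beta eps \<psi> T +
      measure_pmf.expectation (hist_pmf p r \<psi> T) (\<lambda>(h, s). k s)"
    using finT unfolding total_cost_eq
    by (simp add: case_prod_unfold integrable_measure_pmf_finite)
  finally show ?thesis by (simp add: path_cost_def)
qed

lemma avg_cost_stationary_le:
  assumes f: "\<And>s. f s \<subseteq> {1..N}"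
    and acoe: "\<And>s. U s (f s) + Q (f s) * v 1 + (1 - Q (f s)) * v (Suc s) \<le> v s + g"
    and below: "\<And>s. L \<le> v s"
  shows "avg_cost p c r beta eps (stationary_det f) \<le> ereal g"
  unfolding avg_cost_def
proof (rule limsup_le_of_le_add_const_div)
  fix T :: nat
  assume T: "1 \<le> T"
  let ?\<phi> = "stationary_det f"
  have valid: "valid_policy N ?\<phi>"
    using f by (rule valid_policy_stationary_det)
  \<comment> \<open>the drift bound with \<open>w = -1\<close> and potential \<open>-v\<close> is an upper bound on the cost\<close>
  have "- v 1 + real T * - g \<le> - 1 * total_cost p c r beta eps ?\<phi> T +
      measure_pmf.expectation (hist_pmf p r ?\<phi> T) (\<lambda>(h, s). - v s)"
  proof (rule total_cost_drift[OF valid])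
    fix h s a
    assume "a \<in> set_pmf (?\<phi> h s)"
    then have "a = f s" by (simp add: stationary_det_def)
    then show "- v s + - g \<le> - 1 * U s a + Q a * - v 1 + (1 - Q a) * - v (Suc s)"
      using acoe[of s] by simp
  qed
  moreover have "measure_pmf.expectation (hist_pmf p r ?\<phi> T) (\<lambda>_. L) \<le>
      measure_pmf.expectation (hist_pmf p r ?\<phi> T) (\<lambda>(h, s). v s)"
    using below finite_set_pmf_hist_pmf[OF valid_policy_finite[OF valid]]
    by (intro expectation_mono_finite) auto
  ultimately have "total_cost p c r beta eps ?\<phi> T \<le> real T * g + (v 1 - L)"
    by (simp add: case_prod_unfold)
  then show "total_cost p c r beta eps ?\<phi> T / real T \<le> g + (v 1 - L) / real T"
    using T by (simp add: field_simps)
qed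

lemma gain_le_avg_cost:
  assumes \<psi>: "valid_policy N \<psi>"
    and acoe: "\<And>s a. a \<subseteq> {1..N} \<Longrightarrow> v s + g \<le> U s a + Q a * v 1 + (1 - Q a) * v (Suc s)"
    and B: "0 \<le> B" and quadratic: "\<And>s. v s \<le> C + B * real s ^ 2"
  shows "ereal g \<le> avg_cost p c r beta eps \<psi>"
proof -
  define w where "w lam = 1 + 3 * lam / (beta * eps)" for lam :: real
  have w_pos: "0 < w lam" if "0 < lam" for lam
    unfolding w_def using that beta_pos eps_pos by (simp add: add_pos_nonneg)
  have actions: "a \<subseteq> {1..N}" if "a \<in> set_pmf (\<psi> h s)" for h s a
    using \<psi> that unfolding valid_policy_def by auto
  have finT: "finite (set_pmf (hist_pmf p r \<psi> T))" for T
    using \<psi> by (intro finite_set_pmf_hist_pmf valid_policy_finite)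
  have perturbed: "ereal (g / w lam) \<le> avg_cost p c r beta eps \<psi>" if lam: "0 < lam" for lam
  proof -
    define k where "k s = v s - lam * real s ^ 3" for s
    define M where "M = C + B * (B / lam) ^ 2"
    have k_le: "k s \<le> M" for s
      using quadratic[of s] quadratic_minus_cubic_le[OF B lam, of "real s"]
      unfolding k_def M_def by linarith
    have drift: "k s + g \<le> w lam * U s a + Q a * k 1 + (1 - Q a) * k (Suc s)"
      if a: "a \<subseteq> {1..N}" for s a
    proof -
      have "lam * (Q a + (1 - Q a) * (real s + 1) ^ 3 - real s ^ 3) \<le> lam * (3 * U s a / (beta * eps))"
        using cube_drift_le[OF a, of s] lam by (intro mult_left_mono) auto
      moreover have "w lam * U s a = U s a + lam * (3 * U s a / (beta * eps))"
        unfolding w_def by (simp add: algebra_simps)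
      ultimately show ?thesis
        using acoe[OF a, of s] unfolding k_def by (simp add: algebra_simps)
    qed
    show ?thesis
      unfolding avg_cost_def
    proof (rule limsup_ge_of_ge_add_const_div)
      fix T :: nat
      assume T: "1 \<le> T"
      have "k 1 + real T * g \<le> w lam * total_cost p c r beta eps \<psi> T +
          measure_pmf.expectation (hist_pmf p r \<psi> T) (\<lambda>(h, s). k s)"
        using \<psi> by (rule total_cost_drift) (use actions drift in blast)
      also have "measure_pmf.expectation (hist_pmf p r \<psi> T) (\<lambda>(h, s). k s) \<le>
          measure_pmf.expectation (hist_pmf p r \<psi> T) (\<lambda>_. M)"
        using finT k_le by (intro expectation_mono_finite) auto
      finally have "real T * g - (M - k 1) \<le> w lam * total_cost p c r beta eps \<psi> T"
        by simp
      then have "real T * (real T * g - (M - k 1)) \<le>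
          real T * (w lam * total_cost p c r beta eps \<psi> T)"
        by (simp add: mult_left_mono)
      then show "g / w lam + (- (M - k 1) / w lam) / real T \<le>
          total_cost p c r beta eps \<psi> T / real T"
        using T w_pos[OF lam] by (simp add: field_simps)
    qed
  qed
  have "((\<lambda>lam. ereal (g / w lam)) \<longlongrightarrow> ereal (g / w 0)) (at_right 0)"
    unfolding w_def using beta_pos eps_pos by (intro tendsto_intros) auto
  moreover have "\<forall>\<^sub>F lam in at_right 0. ereal (g / w lam) \<le> avg_cost p c r beta eps \<psi>"
    using perturbed by (auto simp: eventually_at_right_field intro: exI[of _ 1])
  ultimately have "ereal (g / w 0) \<le> avg_cost p c r beta eps \<psi>"
    by (rule tendsto_upperbound) simp
  then show ?thesis by (simp add: w_def)
qed

section \<open>A solution of the optimality equation\<close>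

definition qmax :: real where
  "qmax = Max (Q ` Pow {1..N})"

lemma Q_le_qmax: "a \<subseteq> {1..N} \<Longrightarrow> Q a \<le> qmax"
  unfolding qmax_def by (intro Max_ge) auto

lemma qmax_attained: "\<exists>a. a \<subseteq> {1..N} \<and> Q a = qmax"
proof -
  have "qmax \<in> Q ` Pow {1..N}"
    unfolding qmax_def by (intro Max_in) auto
  then show ?thesis by auto
qed

lemma qmax_pos: "0 < qmax"
proof -
  have "Q {1} = r 1 * p 1"
    unfolding Qa_def by simp
  also have "\<dots> > 0"
    using p_bounds[of 1] r_bounds[of 1] N_pos by simp
  finally show ?thesis
    using Q_le_qmax[of "{1}"] N_pos by simp
qed

lemma qmax_le_1: "qmax \<le> 1"
proof -
  obtain a where "a \<subseteq> {1..N}" "Q a = qmax" using qmax_attained by blast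
  then show ?thesis using Q_bounds(2) by metis
qed

definition F :: "nat set" where
  "F = arg_min_on E {a. a \<subseteq> {1..N} \<and> Q a = qmax}"

lemma F_sub: "F \<subseteq> {1..N}" and Q_F: "Q F = qmax"
  and E_F_le: "a \<subseteq> {1..N} \<Longrightarrow> Q a = qmax \<Longrightarrow> E F \<le> E a"
proof -
  have fin: "finite {a. a \<subseteq> {1..N} \<and> Q a = qmax}" by simp
  have ne: "{a. a \<subseteq> {1..N} \<and> Q a = qmax} \<noteq> {}" using qmax_attained by blast
  show "F \<subseteq> {1..N}" "Q F = qmax"
    using arg_min_if_finite(1)[OF fin ne, of E] unfolding F_def by auto
  show "a \<subseteq> {1..N} \<Longrightarrow> Q a = qmax \<Longrightarrow> E F \<le> E a"
    unfolding F_def by (rule arg_min_least[OF fin ne]) simp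
qed

definition qgap :: real where
  "qgap = Min (insert 1 ((\<lambda>a. qmax - Q a) ` {a. a \<subseteq> {1..N} \<and> Q a < qmax}))"

lemma qgap_pos: "0 < qgap"
  unfolding qgap_def by (subst Min_gr_iff) auto

lemma qgap_le: "a \<subseteq> {1..N} \<Longrightarrow> Q a < qmax \<Longrightarrow> qgap \<le> qmax - Q a"
  unfolding qgap_def by (intro Min_le) auto

definition tail_sq :: real where
  "tail_sq = beta * eps * (1 - qmax) / qmax"

definition tail_lin :: real where
  "tail_lin = 2 * beta * eps * (1 - qmax) / qmax ^ 2"

text \<open>Closed form of \<open>\<Sum>j. (1 - qmax)^j * (U (s + j) F - g)\<close>, the relative cost of always
  playing \<open>F\<close> from state \<open>s\<close>.\<close>
definition tail_value :: "real \<Rightarrow> nat \<Rightarrow> real" where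
  "tail_value g s = tail_sq * real s ^ 2 + tail_lin * real s
     + ((1 - beta) * E F + beta * eps - g + (1 - qmax) * (tail_sq + tail_lin)) / qmax"

lemma tail_coeffs_nonneg: "0 \<le> tail_sq" "0 \<le> tail_lin"
  unfolding tail_sq_def tail_lin_def using beta_pos eps_pos qmax_pos qmax_le_1 by simp_all

lemma tail_value_rec: "tail_value g s = U s F - g + (1 - qmax) * tail_value g (Suc s)"
  using qmax_pos unfolding tail_value_def tail_sq_def tail_lin_def U_eq Q_F
  by (simp add: field_simps power2_eq_square)

lemma tail_value_shift: "tail_value g s = tail_value 0 s - g / qmax"
  unfolding tail_value_def by (simp add: diff_divide_distrib add_divide_distrib)

lemma tail_value_ge: "- g / qmax \<le> tail_value g s"
proof -
  have "0 \<le> ((1 - beta) * E F + beta * eps + (1 - qmax) * (tail_sq + tail_lin)) / qmax"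
    using E_nonneg[OF F_sub] beta_pos beta_less_1 eps_pos qmax_pos qmax_le_1 tail_coeffs_nonneg
    by simp
  moreover have "0 \<le> tail_sq * real s ^ 2 + tail_lin * real s"
    using tail_coeffs_nonneg by simp
  ultimately show ?thesis
    unfolding tail_value_def by (simp add: diff_divide_distrib add_divide_distrib)
qed

lemma tail_value_le_quadratic: "tail_value g s \<le> tail_value g 0 + (tail_sq + tail_lin) * real s ^ 2"
proof -
  have "real s \<le> real s ^ 2"
    by (cases s) (auto simp: power2_eq_square)
  then have "tail_lin * real s \<le> tail_lin * real s ^ 2"
    using tail_coeffs_nonneg by (intro mult_left_mono)
  then show ?thesis
    unfolding tail_value_def by (simp add: algebra_simps)
qed

definition gain_bound :: real where
  "gain_bound = qmax * tail_value 0 1"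

lemma gain_bound_nonneg: "0 \<le> gain_bound"
  unfolding gain_bound_def using tail_value_ge[of 0 1] qmax_pos by simp

lemma tail_value_gain_bound: "tail_value gain_bound 1 = 0"
  unfolding gain_bound_def using tail_value_shift[of "qmax * tail_value 0 1" 1] qmax_pos by simp

definition threshold :: nat where
  "threshold = max 2 (nat \<lceil>((1 - beta) * E F / qgap + gain_bound / qmax) / (beta * eps)\<rceil>)"

lemma threshold_ge_2: "2 \<le> threshold"
  unfolding threshold_def by simp

lemma threshold_le:
  assumes "threshold \<le> s"
  shows "(1 - beta) * E F / qgap + gain_bound / qmax \<le> beta * eps * real s"
proof -
  let ?x = "((1 - beta) * E F / qgap + gain_bound / qmax) / (beta * eps)"
  have "?x \<le> real (nat \<lceil>?x\<rceil>)" by (rule real_nat_ceiling_ge)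
  also have "\<dots> \<le> real s" using assms unfolding threshold_def by simp
  finally show ?thesis
    using beta_pos eps_pos by (simp add: pos_divide_le_eq mult.commute)
qed

text \<open>Past the threshold, \<open>F\<close> is the optimal action against \<open>tail_value\<close>: any action with a
  smaller success probability pays at least \<open>qgap\<close> times the quadratically growing cost of failing,
  which outweighs the cost saving \<open>(1 - beta) * E F\<close>.\<close>
lemma tail_value_F_optimal:
  assumes g: "g \<le> gain_bound" and s: "threshold \<le> s" and a: "a \<subseteq> {1..N}"
  shows "U s F + (1 - qmax) * tail_value g (Suc s) \<le> U s a + (1 - Q a) * tail_value g (Suc s)"
proof -
  let ?X = "beta * eps * (real s ^ 2 + 2 * real s) + tail_value g (Suc s)"
  have diff: "(U s a + (1 - Q a) * tail_value g (Suc s)) - (U s F + (1 - qmax) * tail_value g (Suc s))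
      = (1 - beta) * (E a - E F) + (qmax - Q a) * ?X"
    unfolding U_eq Q_F by (simp add: algebra_simps)
  have "0 \<le> (1 - beta) * (E a - E F) + (qmax - Q a) * ?X"
  proof (cases "Q a < qmax")
    case True
    have "- gain_bound / qmax \<le> - g / qmax"
      using g qmax_pos by (intro divide_right_mono) auto
    then have "- gain_bound / qmax \<le> tail_value g (Suc s)"
      using tail_value_ge[of g "Suc s"] by linarith
    moreover have "beta * eps * real s \<le> beta * eps * (real s ^ 2 + 2 * real s)"
      using beta_pos eps_pos by (intro mult_left_mono) (auto simp: power2_eq_square)
    ultimately have X: "(1 - beta) * E F / qgap \<le> ?X"
      using threshold_le[OF s] by linarith
    have "qgap * ((1 - beta) * E F / qgap) \<le> (qmax - Q a) * ?X"
    proof (rule mult_mono)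
      show "0 \<le> (1 - beta) * E F / qgap"
        using qgap_pos E_nonneg[OF F_sub] beta_less_1 by simp
    qed (use qgap_le[OF a True] X True in auto)
    moreover have "qgap * ((1 - beta) * E F / qgap) = (1 - beta) * E F"
      using qgap_pos by simp
    moreover have "0 \<le> (1 - beta) * E a"
      using E_nonneg[OF a] beta_less_1 by simp
    ultimately show ?thesis by (simp add: right_diff_distrib)
  next
    case False
    then have "Q a = qmax" using Q_le_qmax[OF a] by simp
    then show ?thesis using E_F_le[OF a] beta_less_1 by simp
  qed
  then show ?thesis using diff by linarith
qed

text \<open>Below the threshold the relative value is computed by backward induction from
  \<open>tail_value g threshold\<close>; \<open>backward_value g k\<close> is the value at state \<open>threshold - k\<close>.\<close>
primrec backward_value :: "real \<Rightarrow> nat \<Rightarrow> real" where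
  "backward_value g 0 = tail_value g threshold"
| "backward_value g (Suc k) =
     Min ((\<lambda>a. U (threshold - Suc k) a - g + (1 - Q a) * backward_value g k) ` Pow {1..N})"

definition rel_value :: "real \<Rightarrow> nat \<Rightarrow> real" where
  "rel_value g s = (if threshold \<le> s then tail_value g s else backward_value g (threshold - s))"

lemma rel_value_tail: "threshold \<le> s \<Longrightarrow> rel_value g s = tail_value g s"
  unfolding rel_value_def by simp

lemma rel_value_below:
  assumes "s < threshold"
  shows "rel_value g s = Min ((\<lambda>a. U s a - g + (1 - Q a) * rel_value g (Suc s)) ` Pow {1..N})"
proof -
  obtain k where k: "threshold - s = Suc k" using assms by (cases "threshold - s") auto
  have "rel_value g (Suc s) = backward_value g k"
  proof (cases "threshold \<le> Suc s")
    case True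
    then have "k = 0" "Suc s = threshold" using k assms by auto
    then show ?thesis by (simp add: rel_value_tail)
  next
    case False
    then have "threshold - Suc s = k" using k by simp
    with False show ?thesis by (simp add: rel_value_def)
  qed
  moreover have "threshold - Suc k = s" using k by simp
  ultimately show ?thesis using assms k unfolding rel_value_def by simp
qed

lemma rel_value_le_below:
  assumes "s < threshold" and "a \<subseteq> {1..N}"
  shows "rel_value g s \<le> U s a - g + (1 - Q a) * rel_value g (Suc s)"
  unfolding rel_value_below[OF assms(1)] using assms(2) by (intro Min_le) auto

lemma rel_value_le:
  assumes g: "g \<le> gain_bound" and a: "a \<subseteq> {1..N}"
  shows "rel_value g s \<le> U s a - g + (1 - Q a) * rel_value g (Suc s)"
proof (cases "threshold \<le> s")
  case True
  then show ?thesis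
    using tail_value_rec[of g s] tail_value_F_optimal[OF g True a]
    by (simp add: rel_value_tail)
next
  case False
  then show ?thesis
    using a by (simp add: rel_value_le_below)
qed

lemma rel_value_attained:
  "\<exists>a. a \<subseteq> {1..N} \<and> rel_value g s = U s a - g + (1 - Q a) * rel_value g (Suc s)"
proof (cases "threshold \<le> s")
  case True
  then show ?thesis
    using F_sub tail_value_rec[of g s] by (auto simp: rel_value_tail Q_F)
next
  case False
  have "Min ((\<lambda>a. U s a - g + (1 - Q a) * rel_value g (Suc s)) ` Pow {1..N})
      \<in> (\<lambda>a. U s a - g + (1 - Q a) * rel_value g (Suc s)) ` Pow {1..N}"
    by (intro Min_in) auto
  with False show ?thesis by (auto simp: rel_value_below)
qed

lemma rel_value_le_tail_value: "rel_value g s \<le> tail_value g s"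
proof (cases "threshold \<le> s")
  case True
  then show ?thesis by (simp add: rel_value_tail)
next
  case False
  then have "s \<le> threshold" by simp
  then show ?thesis
  proof (induction rule: inc_induct)
    case base
    then show ?case by (simp add: rel_value_tail)
  next
    case (step n)
    have "rel_value g n \<le> U n F - g + (1 - qmax) * rel_value g (Suc n)"
      using rel_value_le_below[OF step(2) F_sub] by (simp add: Q_F)
    also have "\<dots> \<le> U n F - g + (1 - qmax) * tail_value g (Suc n)"
      using step(3) qmax_le_1 by (simp add: mult_left_mono)
    also have "\<dots> = tail_value g n"
      by (rule tail_value_rec[symmetric])
    finally show ?case .
  qed
qed

lemma rel_value_zero_nonneg: "0 \<le> rel_value 0 s"
proof (cases "threshold \<le> s")
  case True
  then show ?thesis using tail_value_ge[of 0 s] by (simp add: rel_value_tail)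
next
  case False
  then have "s \<le> threshold" by simp
  then show ?thesis
  proof (induction rule: inc_induct)
    case base
    then show ?case using tail_value_ge[of 0 threshold] by (simp add: rel_value_tail)
  next
    case (step n)
    have "0 \<le> U n a + (1 - Q a) * rel_value 0 (Suc n)" if "a \<subseteq> {1..N}" for a
      using that step(3) U_nonneg Q_bounds by simp
    then show ?case
      unfolding rel_value_below[OF step(2)] by (subst Min_ge_iff) auto
  qed
qed

lemma continuous_backward_value: "continuous_on UNIV (\<lambda>g. backward_value g k)"
proof (induction k)
  case 0
  show ?case
    unfolding backward_value.simps tail_value_def using qmax_pos by (intro continuous_intros) auto
next
  case (Suc k)
  show ?case
    unfolding backward_value.simps
    by (intro continuous_on_Min_image continuous_intros Suc.IH) auto
qed

text \<open>The recursion for \<open>rel_value\<close> omits the reset term \<open>Q a * v 1\<close>, so it is the optimality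
  equation exactly when \<open>rel_value g 1 = 0\<close>.\<close>
lemma gain_exists: "\<exists>g. 0 \<le> g \<and> g \<le> gain_bound \<and> rel_value g 1 = 0"
proof -
  have eq: "rel_value g 1 = backward_value g (threshold - 1)" for g
    unfolding rel_value_def using threshold_ge_2 by simp
  have "rel_value gain_bound 1 \<le> 0"
    using rel_value_le_tail_value[of gain_bound 1] tail_value_gain_bound by simp
  moreover have "0 \<le> rel_value 0 1"
    by (rule rel_value_zero_nonneg)
  moreover have "continuous_on {0..gain_bound} (\<lambda>g. backward_value g (threshold - 1))"
    using continuous_backward_value continuous_on_subset by blast
  ultimately show ?thesis
    using IVT2'[of "\<lambda>g. backward_value g (threshold - 1)" gain_bound 0 0] gain_bound_nonneg
    unfolding eq by auto
qed

lemma rel_value_bounded_below: "\<exists>L. \<forall>s. L \<le> rel_value g s"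
proof -
  define L where "L = min (- g / qmax) (Min (rel_value g ` {..<threshold}))"
  have "L \<le> rel_value g s" for s
  proof (cases "threshold \<le> s")
    case True
    then show ?thesis
      using tail_value_ge[of g s] unfolding L_def by (simp add: rel_value_tail)
  next
    case False
    then have "Min (rel_value g ` {..<threshold}) \<le> rel_value g s"
      by (intro Min_le) auto
    then show ?thesis unfolding L_def by simp
  qed
  then show ?thesis by blast
qed

lemma rel_value_le_quadratic: "rel_value g s \<le> tail_value g 0 + (tail_sq + tail_lin) * real s ^ 2"
  by (rule order_trans[OF rel_value_le_tail_value tail_value_le_quadratic])

end

theorem lemma1:
  fixes N :: nat and p c r :: "nat \<Rightarrow> real" and beta eps :: real
  assumes "N \<ge> 1"
    and "\<And>n. n \<in> {1..N} \<Longrightarrow> 0 < p n \<and> p n \<le> 1"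
    and "\<And>n. n \<in> {1..N} \<Longrightarrow> 0 \<le> c n"
    and "\<And>n. n \<in> {1..N} \<Longrightarrow> 0 < r n \<and> r n \<le> 1"
    and "0 < beta" and "beta < 1" and "0 < eps"
  shows "\<exists>f :: nat \<Rightarrow> nat set. (\<forall>s. f s \<subseteq> {1..N}) \<and>
           (\<forall>\<psi>. valid_policy N \<psi> \<longrightarrow>
              avg_cost p c r beta eps (stationary_det f) \<le> avg_cost p c r beta eps \<psi>)"
proof -
  interpret freshness_mdp N p c r beta eps
    using assms by unfold_locales auto
  obtain g where g: "g \<le> gain_bound" and normalised: "rel_value g 1 = 0"
    using gain_exists by blast
  obtain f where f: "\<And>s. f s \<subseteq> {1..N}"
    and greedy: "\<And>s. rel_value g s = U s (f s) - g + (1 - Q (f s)) * rel_value g (Suc s)"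
    using rel_value_attained[of g] by metis
  obtain L where "\<And>s. L \<le> rel_value g s"
    using rel_value_bounded_below by blast
  then have "avg_cost p c r beta eps (stationary_det f) \<le> ereal g"
  proof (rule avg_cost_stationary_le[OF f, rotated])
    show "U s (f s) + Q (f s) * rel_value g 1 + (1 - Q (f s)) * rel_value g (Suc s) \<le>
        rel_value g s + g" for s
      using greedy[of s] normalised by simp
  qed
  moreover have "ereal g \<le> avg_cost p c r beta eps \<psi>" if "valid_policy N \<psi>" for \<psi>
    using that
  proof (rule gain_le_avg_cost[where B = "tail_sq + tail_lin" and C = "tail_value g 0"])
    show "rel_value g s + g \<le> U s a + Q a * rel_value g 1 + (1 - Q a) * rel_value g (Suc s)"
      if "a \<subseteq> {1..N}" for s a
      using rel_value_le[OF g that, of s] normalised by simp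
  qed (use tail_coeffs_nonneg rel_value_le_quadratic in simp_all)
  ultimately show ?thesis
    using f by (blast intro: order_trans)
qed

end
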